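(* Let $\mathcal X\subseteq\mathcal Y$ be subcategories of $\mathcal C$ such that $\mathcal Y$ is closed under extensions and $\mathcal X$ is a generator of $\mathcal Y$. Let $n\ge1$ and suppose there are $\mathbb E$-triangles $K_{i+1}\to Y_i\to K_i\dashrightarrow$ for $1\le i\le n$ with $K_1=A$, $K_{n+1}=A'$ and all $Y_i\in\mathcal Y$. Then there exist objects $U_n,V_n\in\mathcal C$ such that $U_n\in\mathcal Y$, there is an $\mathbb E$-triangle $U_n\to V_n\to A'\dashrightarrow$, and there are $\mathbb E$-triangles $L_{i+1}\to X_i\to L_i\dashrightarrow$ for $1\le i\le n$ with $L_1=A$, $L_{n+1}=V_n$ and all $X_i\in\mathcal X$.
   Context: $(\mathcal C,\mathbb E,\mathfrak s)$ is an extriangulated category in the sense of Nakaoka–Palu, Krull–Schmidt, with enough projectives and enough injectives; subcategories are full, additive, closed under isomorphisms. Closed under extensions: for every $\mathbb E$-triangle $A\to B\to C\dashrightarrow$ with $A,C$ in the subcategory, $B$ is in it. A subcategory $\mathcal X$ is a generator for $\mathcal Y$ if $\mathcal X\subseteq\mathcal Y$ and every $Y\in\mathcal Y$ admits an $\mathbb E$-triangle $Y'\to X\to Y\dashrightarrow$ with $X\in\mathcal X$ and $Y'\in\mathcal Y$. *)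

theory Defs
  imports Main
begin

text \<open>Conventions:
  cmp C g f  is the composite g after f;
  Ext C Z A  is the abelian group E(Z,A) (extensions of Z by A);
  epush C Z a d  is a_* d  for d in E(Z, src a), giving an element of E(Z, trg a);
  epull C A c d  is c^* d  for d in E(trg c, A), giving an element of E(src c, A);
  realizes C d x y  means  s(d) = [A -x-> B -y-> Z], i.e. A -x-> B -y-> Z -d-> is an E-triangle.\<close>

record ('o, 'm, 'e) extri =
  obs :: "'o set"
  arrs :: "'m set"
  src :: "'m \<Rightarrow> 'o"
  trg :: "'m \<Rightarrow> 'o"
  cmp :: "'m \<Rightarrow> 'm \<Rightarrow> 'm"
  idm :: "'o \<Rightarrow> 'm"
  madd :: "'m \<Rightarrow> 'm \<Rightarrow> 'm"
  mneg :: "'m \<Rightarrow> 'm"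
  mzero :: "'o \<Rightarrow> 'o \<Rightarrow> 'm"
  Ext :: "'o \<Rightarrow> 'o \<Rightarrow> 'e set"
  eadd :: "'o \<Rightarrow> 'o \<Rightarrow> 'e \<Rightarrow> 'e \<Rightarrow> 'e"
  eneg :: "'o \<Rightarrow> 'o \<Rightarrow> 'e \<Rightarrow> 'e"
  ezero :: "'o \<Rightarrow> 'o \<Rightarrow> 'e"
  epush :: "'o \<Rightarrow> 'm \<Rightarrow> 'e \<Rightarrow> 'e"
  epull :: "'o \<Rightarrow> 'm \<Rightarrow> 'e \<Rightarrow> 'e"
  realizes :: "'e \<Rightarrow> 'm \<Rightarrow> 'm \<Rightarrow> bool"

definition hom :: "('o,'m,'e) extri \<Rightarrow> 'o \<Rightarrow> 'o \<Rightarrow> 'm set" where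
  "hom C A B = {f \<in> arrs C. src C f = A \<and> trg C f = B}"

definition is_category :: "('o,'m,'e) extri \<Rightarrow> bool" where
  "is_category C \<longleftrightarrow>
     (\<forall>f \<in> arrs C. src C f \<in> obs C \<and> trg C f \<in> obs C) \<and>
     (\<forall>A \<in> obs C. idm C A \<in> hom C A A) \<and>
     (\<forall>A B D f g. f \<in> hom C A B \<and> g \<in> hom C B D \<longrightarrow> cmp C g f \<in> hom C A D) \<and>
     (\<forall>A B f. f \<in> hom C A B \<longrightarrow> cmp C (idm C B) f = f \<and> cmp C f (idm C A) = f) \<and>
     (\<forall>A B D E f g h. f \<in> hom C A B \<and> g \<in> hom C B D \<and> h \<in> hom C D E \<longrightarrow>
        cmp C h (cmp C g f) = cmp C (cmp C h g) f)"

definition is_iso :: "('o,'m,'e) extri \<Rightarrow> 'm \<Rightarrow> bool" where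
  "is_iso C f \<longleftrightarrow> f \<in> arrs C \<and>
     (\<exists>g \<in> hom C (trg C f) (src C f). cmp C g f = idm C (src C f) \<and> cmp C f g = idm C (trg C f))"

definition iso_obs :: "('o,'m,'e) extri \<Rightarrow> 'o \<Rightarrow> 'o \<Rightarrow> bool" where
  "iso_obs C A B \<longleftrightarrow> (\<exists>f \<in> hom C A B. is_iso C f)"

definition is_zero_ob :: "('o,'m,'e) extri \<Rightarrow> 'o \<Rightarrow> bool" where
  "is_zero_ob C Z \<longleftrightarrow> Z \<in> obs C \<and>
     (\<forall>A \<in> obs C. hom C Z A = {mzero C Z A} \<and> hom C A Z = {mzero C A Z})"

definition is_biprod :: "('o,'m,'e) extri \<Rightarrow> 'o \<Rightarrow> 'o \<Rightarrow> 'o \<Rightarrow> 'm \<Rightarrow> 'm \<Rightarrow> 'm \<Rightarrow> 'm \<Rightarrow> bool" where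
  "is_biprod C A B S i1 p1 i2 p2 \<longleftrightarrow> S \<in> obs C \<and>
     i1 \<in> hom C A S \<and> p1 \<in> hom C S A \<and> i2 \<in> hom C B S \<and> p2 \<in> hom C S B \<and>
     cmp C p1 i1 = idm C A \<and> cmp C p2 i2 = idm C B \<and>
     cmp C p2 i1 = mzero C A B \<and> cmp C p1 i2 = mzero C B A \<and>
     madd C (cmp C i1 p1) (cmp C i2 p2) = idm C S"

definition is_additive :: "('o,'m,'e) extri \<Rightarrow> bool" where
  "is_additive C \<longleftrightarrow>
     (\<forall>A \<in> obs C. \<forall>B \<in> obs C. mzero C A B \<in> hom C A B) \<and>
     (\<forall>A B f g. f \<in> hom C A B \<and> g \<in> hom C A B \<longrightarrow> madd C f g \<in> hom C A B) \<and>
     (\<forall>A B f. f \<in> hom C A B \<longrightarrow> mneg C f \<in> hom C A B) \<and>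
     (\<forall>A B f g h. f \<in> hom C A B \<and> g \<in> hom C A B \<and> h \<in> hom C A B \<longrightarrow>
        madd C (madd C f g) h = madd C f (madd C g h)) \<and>
     (\<forall>A B f g. f \<in> hom C A B \<and> g \<in> hom C A B \<longrightarrow> madd C f g = madd C g f) \<and>
     (\<forall>A B f. f \<in> hom C A B \<longrightarrow> madd C f (mzero C A B) = f \<and> madd C f (mneg C f) = mzero C A B) \<and>
     (\<forall>A B D f g h. f \<in> hom C A B \<and> g \<in> hom C A B \<and> h \<in> hom C B D \<longrightarrow>
        cmp C h (madd C f g) = madd C (cmp C h f) (cmp C h g)) \<and>
     (\<forall>A B D f g h. f \<in> hom C A B \<and> g \<in> hom C A B \<and> h \<in> hom C D A \<longrightarrow>
        cmp C (madd C f g) h = madd C (cmp C f h) (cmp C g h)) \<and>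
     (\<exists>Z. is_zero_ob C Z) \<and>
     (\<forall>A \<in> obs C. \<forall>B \<in> obs C. \<exists>S i1 p1 i2 p2. is_biprod C A B S i1 p1 i2 p2)"

definition is_biadditive_functor :: "('o,'m,'e) extri \<Rightarrow> bool" where
  "is_biadditive_functor C \<longleftrightarrow>
     (\<forall>Z \<in> obs C. \<forall>A \<in> obs C. ezero C Z A \<in> Ext C Z A \<and>
        (\<forall>d \<in> Ext C Z A. \<forall>d' \<in> Ext C Z A. eadd C Z A d d' \<in> Ext C Z A) \<and>
        (\<forall>d \<in> Ext C Z A. eneg C Z A d \<in> Ext C Z A) \<and>
        (\<forall>d \<in> Ext C Z A. \<forall>d' \<in> Ext C Z A. \<forall>d'' \<in> Ext C Z A.
           eadd C Z A (eadd C Z A d d') d'' = eadd C Z A d (eadd C Z A d' d'')) \<and>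
        (\<forall>d \<in> Ext C Z A. \<forall>d' \<in> Ext C Z A. eadd C Z A d d' = eadd C Z A d' d) \<and>
        (\<forall>d \<in> Ext C Z A. eadd C Z A d (ezero C Z A) = d \<and>
           eadd C Z A d (eneg C Z A d) = ezero C Z A)) \<and>
     (\<forall>Z A A' a d. Z \<in> obs C \<and> a \<in> hom C A A' \<and> d \<in> Ext C Z A \<longrightarrow> epush C Z a d \<in> Ext C Z A') \<and>
     (\<forall>Z Z' A c d. A \<in> obs C \<and> c \<in> hom C Z' Z \<and> d \<in> Ext C Z A \<longrightarrow> epull C A c d \<in> Ext C Z' A) \<and>
     (\<forall>Z A d. Z \<in> obs C \<and> A \<in> obs C \<and> d \<in> Ext C Z A \<longrightarrow>
        epush C Z (idm C A) d = d \<and> epull C A (idm C Z) d = d) \<and>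
     (\<forall>Z A A' A'' a b d. Z \<in> obs C \<and> a \<in> hom C A A' \<and> b \<in> hom C A' A'' \<and> d \<in> Ext C Z A \<longrightarrow>
        epush C Z (cmp C b a) d = epush C Z b (epush C Z a d)) \<and>
     (\<forall>Z Z' Z'' A c c' d. A \<in> obs C \<and> c \<in> hom C Z' Z \<and> c' \<in> hom C Z'' Z' \<and> d \<in> Ext C Z A \<longrightarrow>
        epull C A (cmp C c c') d = epull C A c' (epull C A c d)) \<and>
     (\<forall>Z Z' A A' a c d. a \<in> hom C A A' \<and> c \<in> hom C Z' Z \<and> d \<in> Ext C Z A \<longrightarrow>
        epush C Z' a (epull C A c d) = epull C A' c (epush C Z a d)) \<and>
     (\<forall>Z A A' a d d'. Z \<in> obs C \<and> a \<in> hom C A A' \<and> d \<in> Ext C Z A \<and> d' \<in> Ext C Z A \<longrightarrow>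
        epush C Z a (eadd C Z A d d') = eadd C Z A' (epush C Z a d) (epush C Z a d')) \<and>
     (\<forall>Z Z' A c d d'. A \<in> obs C \<and> c \<in> hom C Z' Z \<and> d \<in> Ext C Z A \<and> d' \<in> Ext C Z A \<longrightarrow>
        epull C A c (eadd C Z A d d') = eadd C Z' A (epull C A c d) (epull C A c d')) \<and>
     (\<forall>Z A A' a a' d. Z \<in> obs C \<and> a \<in> hom C A A' \<and> a' \<in> hom C A A' \<and> d \<in> Ext C Z A \<longrightarrow>
        epush C Z (madd C a a') d = eadd C Z A' (epush C Z a d) (epush C Z a' d)) \<and>
     (\<forall>Z Z' A c c' d. A \<in> obs C \<and> c \<in> hom C Z' Z \<and> c' \<in> hom C Z' Z \<and> d \<in> Ext C Z A \<longrightarrow>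
        epull C A (madd C c c') d = eadd C Z' A (epull C A c d) (epull C A c' d))"

definition seq_equiv :: "('o,'m,'e) extri \<Rightarrow> 'm \<Rightarrow> 'm \<Rightarrow> 'm \<Rightarrow> 'm \<Rightarrow> bool" where
  "seq_equiv C x y x' y' \<longleftrightarrow>
     x \<in> arrs C \<and> y \<in> arrs C \<and> x' \<in> arrs C \<and> y' \<in> arrs C \<and>
     trg C x = src C y \<and> trg C x' = src C y' \<and>
     src C x = src C x' \<and> trg C y = trg C y' \<and>
     (\<exists>b \<in> hom C (trg C x) (trg C x'). is_iso C b \<and> cmp C b x = x' \<and> cmp C y' b = y)"

definition is_realization :: "('o,'m,'e) extri \<Rightarrow> bool" where
  "is_realization C \<longleftrightarrow>
     (\<forall>d x y. realizes C d x y \<longrightarrow> x \<in> arrs C \<and> y \<in> arrs C \<and> trg C x = src C y \<and>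
        d \<in> Ext C (trg C y) (src C x)) \<and>
     (\<forall>Z \<in> obs C. \<forall>A \<in> obs C. \<forall>d \<in> Ext C Z A.
        \<exists>x y. src C x = A \<and> trg C y = Z \<and> realizes C d x y) \<and>
     (\<forall>d x y x' y'. realizes C d x y \<longrightarrow> (realizes C d x' y' \<longleftrightarrow> seq_equiv C x y x' y')) \<and>
     (\<forall>d d' x y x' y' a c. realizes C d x y \<and> realizes C d' x' y' \<and>
        a \<in> hom C (src C x) (src C x') \<and> c \<in> hom C (trg C y) (trg C y') \<and>
        epush C (trg C y) a d = epull C (src C x') c d' \<longrightarrow>
        (\<exists>b \<in> hom C (trg C x) (trg C x'). cmp C b x = cmp C x' a \<and> cmp C y' b = cmp C c y))"

definition is_additive_realization :: "('o,'m,'e) extri \<Rightarrow> bool" where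
  "is_additive_realization C \<longleftrightarrow>
     (\<forall>A Z S i1 p1 i2 p2. is_biprod C A Z S i1 p1 i2 p2 \<longrightarrow> realizes C (ezero C Z A) i1 p2) \<and>
     (\<forall>d d' x y x' y' SA iA pA jA qA SB iB pB jB qB SZ iZ pZ jZ qZ.
        realizes C d x y \<and> realizes C d' x' y' \<and>
        is_biprod C (src C x) (src C x') SA iA pA jA qA \<and>
        is_biprod C (trg C x) (trg C x') SB iB pB jB qB \<and>
        is_biprod C (trg C y) (trg C y') SZ iZ pZ jZ qZ \<longrightarrow>
        realizes C
          (eadd C SZ SA (epush C SZ iA (epull C (src C x) pZ d))
                        (epush C SZ jA (epull C (src C x') qZ d')))
          (madd C (cmp C iB (cmp C x pA)) (cmp C jB (cmp C x' qA)))
          (madd C (cmp C iZ (cmp C y pB)) (cmp C jZ (cmp C y' qB))))"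

definition ET3 :: "('o,'m,'e) extri \<Rightarrow> bool" where
  "ET3 C \<longleftrightarrow>
     (\<forall>d d' x y x' y' a b. realizes C d x y \<and> realizes C d' x' y' \<and>
        a \<in> hom C (src C x) (src C x') \<and> b \<in> hom C (trg C x) (trg C x') \<and>
        cmp C b x = cmp C x' a \<longrightarrow>
        (\<exists>c \<in> hom C (trg C y) (trg C y'). cmp C c y = cmp C y' b \<and>
           epush C (trg C y) a d = epull C (src C x') c d'))"

definition ET3op :: "('o,'m,'e) extri \<Rightarrow> bool" where
  "ET3op C \<longleftrightarrow>
     (\<forall>d d' x y x' y' b c. realizes C d x y \<and> realizes C d' x' y' \<and>
        b \<in> hom C (trg C x) (trg C x') \<and> c \<in> hom C (trg C y) (trg C y') \<and>
        cmp C y' b = cmp C c y \<longrightarrow>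
        (\<exists>a \<in> hom C (src C x) (src C x'). cmp C x' a = cmp C b x \<and>
           epush C (trg C y) a d = epull C (src C x') c d'))"

text \<open>(ET4): for E-triangles A -f-> B -f'-> D -d-> and B -g-> C -g'-> F -d'->.\<close>
definition ET4 :: "('o,'m,'e) extri \<Rightarrow> bool" where
  "ET4 C \<longleftrightarrow>
     (\<forall>d d' f f' g g'. realizes C d f f' \<and> realizes C d' g g' \<and> trg C f = src C g \<longrightarrow>
        (\<exists>E h' dd e d''.
           h' \<in> hom C (trg C g) E \<and> dd \<in> hom C (trg C f') E \<and> e \<in> hom C E (trg C g') \<and>
           realizes C d'' (cmp C g f) h' \<and>
           realizes C (epush C (trg C g') f' d') dd e \<and>
           cmp C dd f' = cmp C h' g \<and> cmp C e h' = g' \<and>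
           epull C (src C f) dd d'' = d \<and>
           epush C E f d'' = epull C (trg C f) e d'))"

text \<open>(ET4op): for E-triangles D -p-> B -q-> A -d-> and F -r-> C -s-> B -d'->.\<close>
definition ET4op :: "('o,'m,'e) extri \<Rightarrow> bool" where
  "ET4op C \<longleftrightarrow>
     (\<forall>d d' p q r s. realizes C d p q \<and> realizes C d' r s \<and> trg C s = src C q \<longrightarrow>
        (\<exists>E h' dd e d''.
           h' \<in> hom C E (trg C r) \<and> dd \<in> hom C E (src C p) \<and> e \<in> hom C (src C r) E \<and>
           realizes C d'' h' (cmp C q s) \<and>
           realizes C (epull C (src C r) p d') e dd \<and>
           cmp C p dd = cmp C s h' \<and> cmp C h' e = r \<and>
           epush C (trg C q) dd d'' = d \<and>
           epull C E q d'' = epush C (trg C s) e d'))"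

definition is_extriangulated :: "('o,'m,'e) extri \<Rightarrow> bool" where
  "is_extriangulated C \<longleftrightarrow> is_category C \<and> is_additive C \<and> is_biadditive_functor C \<and>
     is_realization C \<and> is_additive_realization C \<and> ET3 C \<and> ET3op C \<and> ET4 C \<and> ET4op C"

definition etri :: "('o,'m,'e) extri \<Rightarrow> 'o \<Rightarrow> 'o \<Rightarrow> 'o \<Rightarrow> bool" where
  "etri C A B Z \<longleftrightarrow> (\<exists>d x y. x \<in> hom C A B \<and> y \<in> hom C B Z \<and> realizes C d x y)"

definition local_ob :: "('o,'m,'e) extri \<Rightarrow> 'o \<Rightarrow> bool" where
  "local_ob C X \<longleftrightarrow> X \<in> obs C \<and> idm C X \<noteq> mzero C X X \<and>
     (\<forall>f \<in> hom C X X. is_iso C f \<or> is_iso C (madd C (idm C X) (mneg C f)))"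

definition msum :: "('o,'m,'e) extri \<Rightarrow> 'o \<Rightarrow> 'o \<Rightarrow> 'm list \<Rightarrow> 'm" where
  "msum C A B fs = foldr (madd C) fs (mzero C A B)"

definition krull_schmidt :: "('o,'m,'e) extri \<Rightarrow> bool" where
  "krull_schmidt C \<longleftrightarrow> (\<forall>A \<in> obs C. \<exists>ds :: ('o \<times> 'm \<times> 'm) list.
     (\<forall>(X, i, p) \<in> set ds. local_ob C X \<and> i \<in> hom C X A \<and> p \<in> hom C A X) \<and>
     (\<forall>k < length ds. \<forall>l < length ds.
        cmp C (snd (snd (ds ! k))) (fst (snd (ds ! l))) =
          (if k = l then idm C (fst (ds ! k)) else mzero C (fst (ds ! l)) (fst (ds ! k)))) \<and>
     msum C A A (map (\<lambda>(X, i, p). cmp C i p) ds) = idm C A)"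

definition projective :: "('o,'m,'e) extri \<Rightarrow> 'o \<Rightarrow> bool" where
  "projective C P \<longleftrightarrow> P \<in> obs C \<and> (\<forall>d x y c. realizes C d x y \<and> c \<in> hom C P (trg C y) \<longrightarrow>
     (\<exists>b \<in> hom C P (src C y). cmp C y b = c))"

definition injective :: "('o,'m,'e) extri \<Rightarrow> 'o \<Rightarrow> bool" where
  "injective C I \<longleftrightarrow> I \<in> obs C \<and> (\<forall>d x y a. realizes C d x y \<and> a \<in> hom C (src C x) I \<longrightarrow>
     (\<exists>b \<in> hom C (trg C x) I. cmp C b x = a))"

definition enough_projectives :: "('o,'m,'e) extri \<Rightarrow> bool" where
  "enough_projectives C \<longleftrightarrow> (\<forall>Z \<in> obs C. \<exists>A P. projective C P \<and> etri C A P Z)"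

definition enough_injectives :: "('o,'m,'e) extri \<Rightarrow> bool" where
  "enough_injectives C \<longleftrightarrow> (\<forall>A \<in> obs C. \<exists>I Z. injective C I \<and> etri C A I Z)"

definition standing :: "('o,'m,'e) extri \<Rightarrow> bool" where
  "standing C \<longleftrightarrow> is_extriangulated C \<and> krull_schmidt C \<and>
     enough_projectives C \<and> enough_injectives C"

text \<open>Full additive subcategory closed under isomorphisms (given by its class of objects).\<close>
definition subcat :: "('o,'m,'e) extri \<Rightarrow> 'o set \<Rightarrow> bool" where
  "subcat C S \<longleftrightarrow> S \<subseteq> obs C \<and>
     (\<forall>A B. A \<in> S \<and> iso_obs C A B \<longrightarrow> B \<in> S) \<and>
     (\<exists>Z \<in> S. is_zero_ob C Z) \<and>
     (\<forall>A B S' i1 p1 i2 p2. A \<in> S \<and> B \<in> S \<and> is_biprod C A B S' i1 p1 i2 p2 \<longrightarrow> S' \<in> S)"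

definition ext_closed :: "('o,'m,'e) extri \<Rightarrow> 'o set \<Rightarrow> bool" where
  "ext_closed C S \<longleftrightarrow> (\<forall>A B Z. etri C A B Z \<and> A \<in> S \<and> Z \<in> S \<longrightarrow> B \<in> S)"

definition generator :: "('o,'m,'e) extri \<Rightarrow> 'o set \<Rightarrow> 'o set \<Rightarrow> bool" where
  "generator C X Y \<longleftrightarrow> X \<subseteq> Y \<and> (\<forall>Y0 \<in> Y. \<exists>Y' X0. X0 \<in> X \<and> Y' \<in> Y \<and> etri C Y' X0 Y0)"

end

theory Submission
  imports Defs
begin

text \<open>Given U \<rightarrow> V \<rightarrow> K_m with U \<in> Y and the next triangle
  K_{m+1} \<rightarrow> Y_m \<rightarrow> K_m, realise the extension of K_m by U \<oplus> K_{m+1} whose components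
  are the two given extensions, with middle term M. Two applications of (ET4), against the
  split triangles of U \<oplus> K_{m+1}, give triangles K_{m+1} \<rightarrow> M \<rightarrow> V and U \<rightarrow> M \<rightarrow> Y_m, so
  M \<in> Y by extension closure. Covering M by the generator, U' \<rightarrow> X \<rightarrow> M, (ET4op) yields
  E \<rightarrow> X \<rightarrow> V and U' \<rightarrow> E \<rightarrow> K_{m+1}: the X-resolution grows by one step and U' \<in> Y.\<close>

locale extriangulated =
  fixes C :: "('o, 'm, 'e) extri"
  assumes extriangulated: "is_extriangulated C"
begin

lemma category: "is_category C" and additive: "is_additive C"
  and biadditive: "is_biadditive_functor C" and realization: "is_realization C"
  and additive_realization: "is_additive_realization C"
  and ET3: "ET3 C" and ET4: "ET4 C" and ET4op: "ET4op C"
  using extriangulated by (simp_all add: is_extriangulated_def)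

lemma hom_src: "f \<in> hom C A B \<Longrightarrow> src C f = A"
  and hom_trg: "f \<in> hom C A B \<Longrightarrow> trg C f = B"
  and hom_arrs: "f \<in> hom C A B \<Longrightarrow> f \<in> arrs C"
  by (simp_all add: hom_def)

lemma hom_obs: "f \<in> hom C A B \<Longrightarrow> A \<in> obs C \<and> B \<in> obs C"
  using category by (auto simp: is_category_def hom_def)

lemma comp_in_hom: "f \<in> hom C A B \<Longrightarrow> g \<in> hom C B D \<Longrightarrow> cmp C g f \<in> hom C A D"
  and id_in_hom: "A \<in> obs C \<Longrightarrow> idm C A \<in> hom C A A"
  and comp_id_left: "f \<in> hom C A B \<Longrightarrow> cmp C (idm C B) f = f"
  and comp_id_right: "f \<in> hom C A B \<Longrightarrow> cmp C f (idm C A) = f"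
  and comp_assoc: "f \<in> hom C A B \<Longrightarrow> g \<in> hom C B D \<Longrightarrow> h \<in> hom C D E \<Longrightarrow>
     cmp C h (cmp C g f) = cmp C (cmp C h g) f"
  using category unfolding is_category_def by blast+

lemma zero_in_hom: "A \<in> obs C \<Longrightarrow> B \<in> obs C \<Longrightarrow> mzero C A B \<in> hom C A B"
  and madd_in_hom: "f \<in> hom C A B \<Longrightarrow> g \<in> hom C A B \<Longrightarrow> madd C f g \<in> hom C A B"
  and mneg_in_hom: "f \<in> hom C A B \<Longrightarrow> mneg C f \<in> hom C A B"
  and madd_assoc: "f \<in> hom C A B \<Longrightarrow> g \<in> hom C A B \<Longrightarrow> h \<in> hom C A B \<Longrightarrow>
     madd C (madd C f g) h = madd C f (madd C g h)"
  and madd_commute: "f \<in> hom C A B \<Longrightarrow> g \<in> hom C A B \<Longrightarrow> madd C f g = madd C g f"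
  and madd_zero_right: "f \<in> hom C A B \<Longrightarrow> madd C f (mzero C A B) = f"
  and madd_neg_right: "f \<in> hom C A B \<Longrightarrow> madd C f (mneg C f) = mzero C A B"
  and comp_madd_left: "f \<in> hom C A B \<Longrightarrow> g \<in> hom C A B \<Longrightarrow> h \<in> hom C B D \<Longrightarrow>
     cmp C h (madd C f g) = madd C (cmp C h f) (cmp C h g)"
  and comp_madd_right: "f \<in> hom C A B \<Longrightarrow> g \<in> hom C A B \<Longrightarrow> h \<in> hom C D A \<Longrightarrow>
     cmp C (madd C f g) h = madd C (cmp C f h) (cmp C g h)"
  using additive unfolding is_additive_def by auto

lemma biprod_exists: "A \<in> obs C \<Longrightarrow> B \<in> obs C \<Longrightarrow> \<exists>S i1 p1 i2 p2. is_biprod C A B S i1 p1 i2 p2"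
  using additive unfolding is_additive_def by simp

lemma Ext_abelian_group:
  assumes "Z \<in> obs C" "A \<in> obs C"
  shows "ezero C Z A \<in> Ext C Z A \<and>
    (\<forall>d \<in> Ext C Z A. \<forall>d' \<in> Ext C Z A. eadd C Z A d d' \<in> Ext C Z A) \<and>
    (\<forall>d \<in> Ext C Z A. eneg C Z A d \<in> Ext C Z A) \<and>
    (\<forall>d \<in> Ext C Z A. \<forall>d' \<in> Ext C Z A. \<forall>d'' \<in> Ext C Z A.
       eadd C Z A (eadd C Z A d d') d'' = eadd C Z A d (eadd C Z A d' d'')) \<and>
    (\<forall>d \<in> Ext C Z A. \<forall>d' \<in> Ext C Z A. eadd C Z A d d' = eadd C Z A d' d) \<and>
    (\<forall>d \<in> Ext C Z A. eadd C Z A d (ezero C Z A) = d \<and> eadd C Z A d (eneg C Z A d) = ezero C Z A)"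
  using biadditive assms unfolding is_biadditive_functor_def by (elim conjE) blast

lemma ezero_in_Ext: "Z \<in> obs C \<Longrightarrow> A \<in> obs C \<Longrightarrow> ezero C Z A \<in> Ext C Z A"
  and eneg_in_Ext: "Z \<in> obs C \<Longrightarrow> A \<in> obs C \<Longrightarrow> d \<in> Ext C Z A \<Longrightarrow> eneg C Z A d \<in> Ext C Z A"
  and eadd_zero_right: "Z \<in> obs C \<Longrightarrow> A \<in> obs C \<Longrightarrow> d \<in> Ext C Z A \<Longrightarrow>
     eadd C Z A d (ezero C Z A) = d"
  and eadd_neg_right: "Z \<in> obs C \<Longrightarrow> A \<in> obs C \<Longrightarrow> d \<in> Ext C Z A \<Longrightarrow>
     eadd C Z A d (eneg C Z A d) = ezero C Z A"
  using Ext_abelian_group[of Z A] by blast+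

lemma eadd_in_Ext: "Z \<in> obs C \<Longrightarrow> A \<in> obs C \<Longrightarrow> d \<in> Ext C Z A \<Longrightarrow> d' \<in> Ext C Z A \<Longrightarrow>
     eadd C Z A d d' \<in> Ext C Z A"
  and eadd_commute: "Z \<in> obs C \<Longrightarrow> A \<in> obs C \<Longrightarrow> d \<in> Ext C Z A \<Longrightarrow> d' \<in> Ext C Z A \<Longrightarrow>
     eadd C Z A d d' = eadd C Z A d' d"
  and eadd_assoc: "Z \<in> obs C \<Longrightarrow> A \<in> obs C \<Longrightarrow> d \<in> Ext C Z A \<Longrightarrow> d' \<in> Ext C Z A \<Longrightarrow>
     d'' \<in> Ext C Z A \<Longrightarrow> eadd C Z A (eadd C Z A d d') d'' = eadd C Z A d (eadd C Z A d' d'')"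
  using Ext_abelian_group[of Z A] by blast+

lemma epush_in_Ext: "Z \<in> obs C \<Longrightarrow> a \<in> hom C A A' \<Longrightarrow> d \<in> Ext C Z A \<Longrightarrow> epush C Z a d \<in> Ext C Z A'"
  and epull_in_Ext: "A \<in> obs C \<Longrightarrow> c \<in> hom C Z' Z \<Longrightarrow> d \<in> Ext C Z A \<Longrightarrow> epull C A c d \<in> Ext C Z' A"
  and epush_id: "Z \<in> obs C \<Longrightarrow> A \<in> obs C \<Longrightarrow> d \<in> Ext C Z A \<Longrightarrow> epush C Z (idm C A) d = d"
  and epull_id: "Z \<in> obs C \<Longrightarrow> A \<in> obs C \<Longrightarrow> d \<in> Ext C Z A \<Longrightarrow> epull C A (idm C Z) d = d"
  and epush_comp: "Z \<in> obs C \<Longrightarrow> a \<in> hom C A A' \<Longrightarrow> b \<in> hom C A' A'' \<Longrightarrow> d \<in> Ext C Z A \<Longrightarrow>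
     epush C Z (cmp C b a) d = epush C Z b (epush C Z a d)"
  and epull_comp: "A \<in> obs C \<Longrightarrow> c \<in> hom C Z' Z \<Longrightarrow> c' \<in> hom C Z'' Z' \<Longrightarrow> d \<in> Ext C Z A \<Longrightarrow>
     epull C A (cmp C c c') d = epull C A c' (epull C A c d)"
  and epush_eadd: "Z \<in> obs C \<Longrightarrow> a \<in> hom C A A' \<Longrightarrow> d \<in> Ext C Z A \<Longrightarrow> d' \<in> Ext C Z A \<Longrightarrow>
     epush C Z a (eadd C Z A d d') = eadd C Z A' (epush C Z a d) (epush C Z a d')"
  and epush_madd: "Z \<in> obs C \<Longrightarrow> a \<in> hom C A A' \<Longrightarrow> a' \<in> hom C A A' \<Longrightarrow> d \<in> Ext C Z A \<Longrightarrow>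
     epush C Z (madd C a a') d = eadd C Z A' (epush C Z a d) (epush C Z a' d)"
  using biadditive unfolding is_biadditive_functor_def by auto

lemma realizes_D: "realizes C d x y \<Longrightarrow>
     x \<in> arrs C \<and> y \<in> arrs C \<and> trg C x = src C y \<and> d \<in> Ext C (trg C y) (src C x)"
  and realizes_exists: "Z \<in> obs C \<Longrightarrow> A \<in> obs C \<Longrightarrow> d \<in> Ext C Z A \<Longrightarrow>
     \<exists>x y. src C x = A \<and> trg C y = Z \<and> realizes C d x y"
  and realizes_iff_seq_equiv: "realizes C d x y \<Longrightarrow> realizes C d x' y' \<longleftrightarrow> seq_equiv C x y x' y'"
  and realizes_morphism: "realizes C d x y \<Longrightarrow> realizes C d' x' y' \<Longrightarrow>
     a \<in> hom C (src C x) (src C x') \<Longrightarrow> c \<in> hom C (trg C y) (trg C y') \<Longrightarrow>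
     epush C (trg C y) a d = epull C (src C x') c d' \<Longrightarrow>
     \<exists>b \<in> hom C (trg C x) (trg C x'). cmp C b x = cmp C x' a \<and> cmp C y' b = cmp C c y"
  using realization unfolding is_realization_def by blast+

lemma biprod_realizes_ezero: "is_biprod C A Z S i1 p1 i2 p2 \<Longrightarrow> realizes C (ezero C Z A) i1 p2"
  using additive_realization unfolding is_additive_realization_def by blast

lemma etri_obs: "etri C A B Z \<Longrightarrow> A \<in> obs C \<and> B \<in> obs C \<and> Z \<in> obs C"
  unfolding etri_def using hom_obs by blast

lemma madd_zero_left: "f \<in> hom C A B \<Longrightarrow> madd C (mzero C A B) f = f"
  using madd_commute madd_zero_right hom_obs zero_in_hom by metis

lemma madd_idem_eq_zero:
  assumes f: "f \<in> hom C A B" and ff: "madd C f f = f"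
  shows "f = mzero C A B"
proof -
  have "mzero C A B = madd C (madd C f f) (mneg C f)" using ff madd_neg_right[OF f] by simp
  also have "\<dots> = f"
    using madd_assoc[OF f f mneg_in_hom[OF f]] madd_neg_right[OF f] madd_zero_right[OF f] by simp
  finally show ?thesis by simp
qed

lemma mneg_unique:
  assumes f: "f \<in> hom C A B" and g: "g \<in> hom C A B" and fg: "madd C f g = mzero C A B"
  shows "g = mneg C f"
proof -
  have nf: "mneg C f \<in> hom C A B" using mneg_in_hom[OF f] .
  have "g = madd C (madd C (mneg C f) f) g"
    using madd_commute[OF nf f] madd_neg_right[OF f] madd_zero_left[OF g] by simp
  also have "\<dots> = mneg C f" using madd_assoc[OF nf f g] fg madd_zero_right[OF nf] by simp
  finally show ?thesis .
qed

lemma mneg_zero: "A \<in> obs C \<Longrightarrow> B \<in> obs C \<Longrightarrow> mneg C (mzero C A B) = mzero C A B"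
  using mneg_unique zero_in_hom madd_zero_right by metis

lemma comp_zero_right:
  assumes h: "h \<in> hom C B D" and A: "A \<in> obs C"
  shows "cmp C h (mzero C A B) = mzero C A D"
proof -
  have z: "mzero C A B \<in> hom C A B" using zero_in_hom A hom_obs[OF h] by blast
  have "cmp C h (mzero C A B) = madd C (cmp C h (mzero C A B)) (cmp C h (mzero C A B))"
    using comp_madd_left[OF z z h] madd_zero_right[OF z] by simp
  then show ?thesis using madd_idem_eq_zero comp_in_hom[OF z h] by metis
qed

lemma comp_zero_left:
  assumes f: "f \<in> hom C A B" and D: "D \<in> obs C"
  shows "cmp C (mzero C B D) f = mzero C A D"
proof -
  have z: "mzero C B D \<in> hom C B D" using zero_in_hom D hom_obs[OF f] by blast
  have "cmp C (mzero C B D) f = madd C (cmp C (mzero C B D) f) (cmp C (mzero C B D) f)"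
    using comp_madd_right[OF z z f] madd_zero_right[OF z] by simp
  then show ?thesis using madd_idem_eq_zero comp_in_hom[OF f z] by metis
qed

lemma comp_neg_right:
  assumes h: "h \<in> hom C B D" and g: "g \<in> hom C A B"
  shows "cmp C h (mneg C g) = mneg C (cmp C h g)"
proof -
  have "madd C (cmp C h g) (cmp C h (mneg C g)) = mzero C A D"
    using comp_madd_left[OF g mneg_in_hom[OF g] h] madd_neg_right[OF g]
      comp_zero_right[OF h] hom_obs[OF g] by simp
  then show ?thesis using mneg_unique comp_in_hom mneg_in_hom h g by blast
qed

lemma comp_neg_left:
  assumes h: "h \<in> hom C B D" and g: "g \<in> hom C A B"
  shows "cmp C (mneg C h) g = mneg C (cmp C h g)"
proof -
  have "madd C (cmp C h g) (cmp C (mneg C h) g) = mzero C A D"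
    using comp_madd_right[OF h mneg_in_hom[OF h] g] madd_neg_right[OF h]
      comp_zero_left[OF g] hom_obs[OF h] by simp
  then show ?thesis using mneg_unique comp_in_hom mneg_in_hom h g by blast
qed

lemma is_iso_if_left_right_inverse:
  assumes g: "g \<in> hom C A B" and l: "l \<in> hom C B A" and r: "r \<in> hom C B A"
    and lg: "cmp C l g = idm C A" and gr: "cmp C g r = idm C B"
  shows "is_iso C g"
proof -
  have "l = cmp C l (cmp C g r)" using gr comp_id_right[OF l] by simp
  also have "\<dots> = r" using comp_assoc[OF r g l] lg comp_id_left[OF r] by simp
  finally show ?thesis unfolding is_iso_def using g l lg gr by (auto simp: hom_def)
qed

lemma biprod_swap: "is_biprod C A B S i1 p1 i2 p2 \<Longrightarrow> is_biprod C B A S i2 p2 i1 p1"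
  unfolding is_biprod_def using madd_commute comp_in_hom by metis

lemma unipotent_invertible:
  assumes N: "N \<in> hom C B B" and NN: "cmp C N N = mzero C B B"
  shows "\<exists>q \<in> hom C B B. cmp C q (madd C N (idm C B)) = idm C B \<and>
                         cmp C (madd C N (idm C B)) q = idm C B"
proof -
  define I where "I = idm C B"
  define q where "q = madd C I (mneg C N)"
  have I: "I \<in> hom C B B" using id_in_hom hom_obs[OF N] I_def by simp
  have nN: "mneg C N \<in> hom C B B" using mneg_in_hom[OF N] .
  have q: "q \<in> hom C B B" using madd_in_hom[OF I nN] q_def by simp
  have Nneg: "cmp C N (mneg C N) = mzero C B B" and negN: "cmp C (mneg C N) N = mzero C B B"
    using comp_neg_right[OF N N] comp_neg_left[OF N N] NN mneg_zero hom_obs[OF N] by simp_all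
  have Nq: "cmp C N q = N"
    using comp_madd_left[OF I nN N] comp_id_right[OF N] Nneg madd_zero_right[OF N] q_def I_def by simp
  have qN: "cmp C q N = N"
    using comp_madd_right[OF I nN N] comp_id_left[OF N] negN madd_zero_right[OF N] q_def I_def by simp
  have Nq_sum: "madd C N q = I"
    using madd_commute[OF I nN] madd_assoc[OF N nN I] madd_neg_right[OF N] madd_zero_left[OF I] q_def
    by simp
  have "cmp C (madd C N I) q = I" using comp_madd_right[OF N I q] Nq comp_id_left[OF q] Nq_sum I_def by simp
  moreover have "cmp C q (madd C N I) = I" using comp_madd_left[OF N I q] qN comp_id_right[OF q] Nq_sum I_def by simp
  ultimately show ?thesis using q I_def by blast
qed

lemma eadd_idem_eq_ezero:
  assumes o: "Z \<in> obs C" "A \<in> obs C" and e: "e \<in> Ext C Z A" and ee: "eadd C Z A e e = e"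
  shows "e = ezero C Z A"
proof -
  have "ezero C Z A = eadd C Z A (eadd C Z A e e) (eneg C Z A e)" using ee eadd_neg_right[OF o e] by simp
  also have "\<dots> = e"
    using eadd_assoc[OF o e e eneg_in_Ext[OF o e]] eadd_neg_right[OF o e] eadd_zero_right[OF o e] by simp
  finally show ?thesis by simp
qed

lemma epush_zero:
  assumes o: "Z \<in> obs C" "A \<in> obs C" "A' \<in> obs C" and d: "d \<in> Ext C Z A"
  shows "epush C Z (mzero C A A') d = ezero C Z A'"
proof -
  have z: "mzero C A A' \<in> hom C A A'" using zero_in_hom o by blast
  have "epush C Z (mzero C A A') d = eadd C Z A' (epush C Z (mzero C A A') d) (epush C Z (mzero C A A') d)"
    using epush_madd[OF o(1) z z d] madd_zero_right[OF z] by simp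
  then show ?thesis using eadd_idem_eq_ezero[OF o(1,3) epush_in_Ext[OF o(1) z d]] by simp
qed

lemma realizes_hom: "realizes C d x y \<Longrightarrow> x \<in> hom C A B \<Longrightarrow> y \<in> hom C B Z \<Longrightarrow> d \<in> Ext C Z A"
  using realizes_D by (auto simp: hom_def)

lemma realizes_factors_through_deflation:
  assumes r: "realizes C d x y" and x: "x \<in> hom C A B" and y: "y \<in> hom C B Z"
    and f: "f \<in> hom C B B'" and fx: "cmp C f x = mzero C A B'"
  shows "\<exists>c \<in> hom C Z B'. cmp C c y = f"
proof -
  have o: "A \<in> obs C" "B' \<in> obs C" using hom_obs x f by auto
  obtain S i1 p1 i2 p2 where bp: "is_biprod C A B' S i1 p1 i2 p2" using biprod_exists o by blast
  have h: "i1 \<in> hom C A S" "i2 \<in> hom C B' S" "p2 \<in> hom C S B'" "cmp C p2 i2 = idm C B'"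
    using bp by (auto simp: is_biprod_def)
  have i2f: "cmp C i2 f \<in> hom C B S" using comp_in_hom f h by blast
  have "cmp C (cmp C i2 f) x = cmp C i1 (mzero C A A)"
    using comp_assoc[OF x f h(2)] fx comp_zero_right[OF h(2) o(1)] comp_zero_right[OF h(1) o(1)] by simp
  then have "realizes C d x y \<and> realizes C (ezero C B' A) i1 p2 \<and>
      mzero C A A \<in> hom C (src C x) (src C i1) \<and> cmp C i2 f \<in> hom C (trg C x) (trg C i1) \<and>
      cmp C (cmp C i2 f) x = cmp C i1 (mzero C A A)"
    using r biprod_realizes_ezero[OF bp] zero_in_hom[OF o(1) o(1)] i2f x h by (simp add: hom_src hom_trg)
  \<comment> \<open>(ET3) against the split triangle A -> A + B' -> B' yields the factorisation\<close>
  then obtain c where "c \<in> hom C (trg C y) (trg C p2)" "cmp C c y = cmp C p2 (cmp C i2 f)"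
    using ET3 unfolding ET3_def by blast
  moreover have "cmp C p2 (cmp C i2 f) = f" using comp_assoc[OF f h(2,3)] h(4) comp_id_left[OF f] by simp
  ultimately show ?thesis using y h by (auto simp: hom_trg)
qed

lemma realizes_endo_invertible:
  assumes r: "realizes C d x y" and x: "x \<in> hom C A B" and y: "y \<in> hom C B Z"
    and p: "p \<in> hom C B B" and px: "cmp C p x = x" and yp: "cmp C y p = y"
  shows "\<exists>q \<in> hom C B B. cmp C q p = idm C B \<and> cmp C p q = idm C B"
proof -
  define I where "I = idm C B"
  define N where "N = madd C p (mneg C I)"
  have o: "B \<in> obs C" using hom_obs p by blast
  have I: "I \<in> hom C B B" using id_in_hom o I_def by simp
  have nI: "mneg C I \<in> hom C B B" using mneg_in_hom[OF I] .
  have N: "N \<in> hom C B B" using madd_in_hom[OF p nI] N_def by simp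
  \<comment> \<open>p - 1 kills x and is killed by y, so it factors through y and squares to zero\<close>
  have "cmp C N x = mzero C A B"
    using comp_madd_right[OF p nI x] px comp_neg_left[OF I x] comp_id_left[OF x] madd_neg_right[OF x]
      N_def I_def by simp
  then obtain c where c: "c \<in> hom C Z B" "cmp C c y = N"
    using realizes_factors_through_deflation[OF r x y N] by blast
  have "cmp C y N = mzero C B Z"
    using comp_madd_left[OF p nI y] yp comp_neg_right[OF y I] comp_id_right[OF y] madd_neg_right[OF y]
      N_def I_def by simp
  then have NN: "cmp C N N = mzero C B B"
    using c comp_assoc[OF N y c(1)] comp_zero_right[OF c(1) o] by simp
  have "p = madd C N I"
    using madd_assoc[OF p nI I] madd_commute[OF nI I] madd_neg_right[OF I] madd_zero_right[OF p] N_def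
    by simp
  then show ?thesis using unipotent_invertible[OF N NN] I_def by simp
qed

lemma realizes_map_is_iso:
  assumes r: "realizes C d x y" "x \<in> hom C A B" "y \<in> hom C B Z"
    and r1: "realizes C d1 x1 y1" "x1 \<in> hom C A B1" "y1 \<in> hom C B1 Z1"
    and g: "g \<in> hom C B1 B" and g': "g' \<in> hom C B B1"
    and "cmp C (cmp C g g') x = x" "cmp C y (cmp C g g') = y"
    and "cmp C (cmp C g' g) x1 = x1" "cmp C y1 (cmp C g' g) = y1"
  shows "is_iso C g"
proof -
  obtain pi where pi: "pi \<in> hom C B B" "cmp C (cmp C g g') pi = idm C B"
    using realizes_endo_invertible[OF r comp_in_hom[OF g' g]] assms by blast
  obtain qi where qi: "qi \<in> hom C B1 B1" "cmp C qi (cmp C g' g) = idm C B1"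
    using realizes_endo_invertible[OF r1 comp_in_hom[OF g g']] assms by blast
  show ?thesis
  proof (rule is_iso_if_left_right_inverse[OF g])
    show "cmp C qi g' \<in> hom C B B1" "cmp C g' pi \<in> hom C B B1"
      using comp_in_hom g' pi qi by blast+
    show "cmp C (cmp C qi g') g = idm C B1" using comp_assoc[OF g g' qi(1)] qi by simp
    show "cmp C g (cmp C g' pi) = idm C B" using comp_assoc[OF pi(1) g' g] pi by simp
  qed
qed

lemma etri_iso_right:
  assumes t: "etri C A B Z" and c: "c \<in> hom C Z' Z" "is_iso C c"
  shows "etri C A B Z'"
proof -
  obtain d x y where x: "x \<in> hom C A B" and y: "y \<in> hom C B Z" and r: "realizes C d x y"
    using t unfolding etri_def by blast
  obtain b where b: "b \<in> hom C Z Z'" "cmp C b c = idm C Z'" "cmp C c b = idm C Z"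
    using c unfolding is_iso_def by (auto simp: hom_src hom_trg)
  have o: "A \<in> obs C" "Z \<in> obs C" "Z' \<in> obs C" using hom_obs x c by auto
  have d: "d \<in> Ext C Z A" using realizes_hom[OF r x y] .
  \<comment> \<open>(x, b y) realises c^* d: compare it with some realisation of c^* d in both directions\<close>
  define e where "e = epull C A c d"
  have e: "e \<in> Ext C Z' A" using epull_in_Ext[OF o(1) c(1) d] e_def by simp
  obtain x1 y1 where xy1: "src C x1 = A" "trg C y1 = Z'" and r1: "realizes C e x1 y1"
    using realizes_exists[OF o(3) o(1) e] by blast
  define B1 where "B1 = trg C x1"
  have x1: "x1 \<in> hom C A B1" and y1: "y1 \<in> hom C B1 Z'"
    using realizes_D[OF r1] xy1 B1_def by (auto simp: hom_def)
  have idA: "idm C A \<in> hom C A A" using id_in_hom o by simp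
  have "epull C A b e = d"
    using epull_comp[OF o(1) c(1) b(1) d] b(3) epull_id[OF o(2,1) d] e_def by simp
  then obtain g where g: "g \<in> hom C B B1" "cmp C g x = x1" "cmp C y1 g = cmp C b y"
    using realizes_morphism[OF r r1, of "idm C A" b] epush_id[OF o(2,1) d] idA b(1) x y x1 y1
      comp_id_right[OF x1] by (auto simp: hom_src hom_trg)
  obtain g' where g': "g' \<in> hom C B1 B" "cmp C g' x1 = x" "cmp C y g' = cmp C c y1"
    using realizes_morphism[OF r1 r, of "idm C A" c] epush_id[OF o(3,1) e] e_def idA c(1) x y x1 y1
      comp_id_right[OF x] by (auto simp: hom_src hom_trg)
  have y_fixed: "cmp C y (cmp C g' g) = y"
    using comp_assoc[OF g(1) g'(1) y] g'(3) comp_assoc[OF g(1) y1 c(1)] g(3)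
      comp_assoc[OF y b(1) c(1)] b(3) comp_id_left[OF y] by simp
  have y1_fixed: "cmp C y1 (cmp C g g') = y1"
    using comp_assoc[OF g'(1) g(1) y1] g(3) comp_assoc[OF g'(1) y b(1)] g'(3)
      comp_assoc[OF y1 c(1) b(1)] b(2) comp_id_left[OF y1] by simp
  have "is_iso C g'"
    using realizes_map_is_iso[OF r x y r1 x1 y1 g'(1) g(1)] y_fixed y1_fixed
      comp_assoc[OF x g(1) g'(1)] comp_assoc[OF x1 g'(1) g(1)] g g' by simp
  moreover have "cmp C (cmp C b y) g' = y1"
    using comp_assoc[OF g'(1) y b(1)] g'(3) comp_assoc[OF y1 c(1) b(1)] b(2) comp_id_left[OF y1] by simp
  ultimately have "seq_equiv C x1 y1 x (cmp C b y)"
    unfolding seq_equiv_def using x1 y1 x comp_in_hom[OF y b(1)] g'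
    by (auto simp: hom_src hom_trg hom_arrs)
  then have "realizes C e x (cmp C b y)" using realizes_iff_seq_equiv[OF r1] by blast
  then show ?thesis unfolding etri_def using x comp_in_hom[OF y b(1)] by blast
qed

lemma biprod_extension_etri:
  assumes bp: "is_biprod C P Q S iP pP iQ pQ"
    and r: "realizes C th mu nu" "mu \<in> hom C S M" "nu \<in> hom C M K"
    and u: "realizes C (epush C K pQ th) u v" "u \<in> hom C Q V" "v \<in> hom C V K"
  shows "etri C P M V"
proof -
  have iP: "iP \<in> hom C P S" and pQ: "pQ \<in> hom C S Q" using bp by (auto simp: is_biprod_def)
  have "realizes C (ezero C Q P) iP pQ \<and> realizes C th mu nu \<and> trg C iP = src C mu"
    using biprod_realizes_ezero[OF bp] r iP by (simp add: hom_src hom_trg)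
  then obtain E h dd e d'' where E: "h \<in> hom C (trg C mu) E" "dd \<in> hom C (trg C pQ) E"
      "realizes C d'' (cmp C mu iP) h" "realizes C (epush C (trg C nu) pQ th) dd e"
    using ET4[unfolded ET4_def, rule_format] by metis
  have "realizes C (epush C K pQ th) dd e" using E(4) r(3) by (simp add: hom_trg)
  then obtain c where "c \<in> hom C V E" "is_iso C c"
    using realizes_iff_seq_equiv[OF u(1)] u(2) E(2) pQ unfolding seq_equiv_def by (auto simp: hom_def)
  moreover have "etri C P M E"
    unfolding etri_def using E(1,3) r(2) comp_in_hom[OF iP r(2)] by (auto simp: hom_trg)
  ultimately show ?thesis using etri_iso_right by blast
qed

lemma Ext_into_biprod:
  assumes bp: "is_biprod C A B S i1 p1 i2 p2" and K: "K \<in> obs C"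
    and d1: "d1 \<in> Ext C K A" and d2: "d2 \<in> Ext C K B"
  shows "\<exists>th \<in> Ext C K S. epush C K p1 th = d1 \<and> epush C K p2 th = d2"
proof -
  have h: "i1 \<in> hom C A S" "p1 \<in> hom C S A" "i2 \<in> hom C B S" "p2 \<in> hom C S B"
    "cmp C p1 i1 = idm C A" "cmp C p2 i2 = idm C B" "cmp C p2 i1 = mzero C A B" "cmp C p1 i2 = mzero C B A"
    using bp by (auto simp: is_biprod_def)
  have o: "A \<in> obs C" "B \<in> obs C" "S \<in> obs C" using hom_obs h by auto
  have e1: "epush C K i1 d1 \<in> Ext C K S" and e2: "epush C K i2 d2 \<in> Ext C K S"
    using epush_in_Ext K h d1 d2 by blast+
  define th where "th = eadd C K S (epush C K i1 d1) (epush C K i2 d2)"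
  have "epush C K p1 th = eadd C K A (epush C K (cmp C p1 i1) d1) (epush C K (cmp C p1 i2) d2)"
    using epush_eadd[OF K h(2) e1 e2] epush_comp[OF K h(1,2) d1] epush_comp[OF K h(3,2) d2] th_def
    by simp
  also have "\<dots> = d1"
    using h(5,8) epush_id[OF K o(1) d1] epush_zero[OF K o(2,1) d2] eadd_zero_right[OF K o(1) d1] by simp
  finally have "epush C K p1 th = d1" .
  moreover have "epush C K p2 th = eadd C K B (epush C K (cmp C p2 i1) d1) (epush C K (cmp C p2 i2) d2)"
    using epush_eadd[OF K h(4) e1 e2] epush_comp[OF K h(1,4) d1] epush_comp[OF K h(3,4) d2] th_def
    by simp
  then have "epush C K p2 th = d2"
    using h(6,7) epush_id[OF K o(2) d2] epush_zero[OF K o(1,2) d1] eadd_commute[OF K o(2) _ d2]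
      ezero_in_Ext[OF K o(2)] eadd_zero_right[OF K o(2) d2] by simp
  moreover have "th \<in> Ext C K S" using eadd_in_Ext[OF K o(3) e1 e2] th_def by simp
  ultimately show ?thesis by blast
qed

lemma etri_pullback_in_ext_closed:
  assumes t1: "etri C U V K" and t2: "etri C K' Y K" and UY: "U \<in> YY" "Y \<in> YY"
    and ec: "ext_closed C YY"
  shows "\<exists>M \<in> YY. etri C K' M V"
proof -
  obtain d1 u v where u: "u \<in> hom C U V" "v \<in> hom C V K" "realizes C d1 u v"
    using t1 unfolding etri_def by blast
  obtain d2 k y where k: "k \<in> hom C K' Y" "y \<in> hom C Y K" "realizes C d2 k y"
    using t2 unfolding etri_def by blast
  have o: "U \<in> obs C" "K \<in> obs C" "K' \<in> obs C" using hom_obs u k by auto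
  obtain S iU pU iK pK where bp: "is_biprod C U K' S iU pU iK pK" using biprod_exists o by blast
  obtain th where th: "th \<in> Ext C K S" "epush C K pU th = d1" "epush C K pK th = d2"
    using Ext_into_biprod[OF bp o(2) realizes_hom[OF u(3,1,2)] realizes_hom[OF k(3,1,2)]] by blast
  obtain mu nu where mn: "src C mu = S" "trg C nu = K" "realizes C th mu nu"
    using realizes_exists[OF o(2) _ th(1)] hom_obs bp unfolding is_biprod_def by metis
  define M where "M = trg C mu"
  have mu: "mu \<in> hom C S M" and nu: "nu \<in> hom C M K"
    using realizes_D[OF mn(3)] mn M_def by (auto simp: hom_def)
  have "etri C K' M V" using biprod_extension_etri[OF biprod_swap[OF bp] mn(3) mu nu] th(2) u by simp
  moreover have "etri C U M Y" using biprod_extension_etri[OF bp mn(3) mu nu] th(3) k by simp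
  then have "M \<in> YY" using ec UY unfolding ext_closed_def by blast
  ultimately show ?thesis by blast
qed

lemma etri_generator_step:
  assumes t: "etri C K' M V" and M: "M \<in> YY" and gen: "generator C XX YY"
  shows "\<exists>E X U. X \<in> XX \<and> U \<in> YY \<and> etri C E X V \<and> etri C U E K'"
proof -
  obtain d p q where p: "p \<in> hom C K' M" "q \<in> hom C M V" "realizes C d p q"
    using t unfolding etri_def by blast
  obtain U X where UX: "X \<in> XX" "U \<in> YY" "etri C U X M" using gen M unfolding generator_def by blast
  obtain d' r s where r: "r \<in> hom C U X" "s \<in> hom C X M" "realizes C d' r s"
    using UX(3) unfolding etri_def by blast
  have "realizes C d p q \<and> realizes C d' r s \<and> trg C s = src C q" using p r by (simp add: hom_src hom_trg)
  then obtain E h dd e d'' where E: "h \<in> hom C E (trg C r)" "dd \<in> hom C E (src C p)"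
      "e \<in> hom C (src C r) E" "realizes C d'' h (cmp C q s)" "realizes C (epull C (src C r) p d') e dd"
    using ET4op[unfolded ET4op_def, rule_format] by metis
  have "etri C E X V" unfolding etri_def using E(1,4) r(1) comp_in_hom[OF r(2) p(2)] by (auto simp: hom_trg)
  moreover have "etri C U E K'" unfolding etri_def using E(2,3,5) p(1) r(1) by (auto simp: hom_src)
  ultimately show ?thesis using UX by blast
qed

lemma generator_resolution:
  assumes ec: "ext_closed C YY" and gen: "generator C XX YY" and n: "n \<ge> 1"
    and K: "\<forall>i \<in> {1..n}. Y i \<in> YY \<and> etri C (K (Suc i)) (Y i) (K i)"
  shows "\<exists>U V. U \<in> YY \<and> etri C U V (K (Suc n)) \<and>
           (\<exists>L X. L 1 = K 1 \<and> L (Suc n) = V \<and>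
              (\<forall>i \<in> {1..n}. X i \<in> XX \<and> etri C (L (Suc i)) (X i) (L i)))"
  using n K
proof (induction n rule: nat_induct_at_least)
  case base
  then obtain E X U where EXU: "X \<in> XX" "U \<in> YY" "etri C E X (K 1)" "etri C U E (K (Suc 1))"
    using etri_generator_step[OF _ _ gen] by (metis atLeastAtMost_singleton singletonI)
  show ?case
    by (intro exI[of _ U] exI[of _ E] conjI exI[of _ "\<lambda>i. if i = 1 then K 1 else E"] exI[of _ "\<lambda>_. X"])
      (use EXU in auto)
next
  case (Suc m)
  then obtain U V L X where U: "U \<in> YY" "etri C U V (K (Suc m))"
      and L: "L 1 = K 1" "L (Suc m) = V" "\<forall>i \<in> {1..m}. X i \<in> XX \<and> etri C (L (Suc i)) (X i) (L i)"
    by force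
  have "Y (Suc m) \<in> YY" "etri C (K (Suc (Suc m))) (Y (Suc m)) (K (Suc m))"
    using Suc.prems Suc.hyps by auto
  then obtain M where "M \<in> YY" "etri C (K (Suc (Suc m))) M V"
    using etri_pullback_in_ext_closed[OF U(2)] U(1) ec by blast
  then obtain E X' U' where E: "X' \<in> XX" "U' \<in> YY" "etri C E X' V" "etri C U' E (K (Suc (Suc m)))"
    using etri_generator_step gen by blast
  let ?L = "L(Suc (Suc m) := E)" and ?X = "X(Suc m := X')"
  have "\<forall>i \<in> {1..Suc m}. ?X i \<in> XX \<and> etri C (?L (Suc i)) (?X i) (?L i)"
    using L E by (auto simp: le_Suc_eq)
  moreover have "?L 1 = K 1" using L(1) by simp
  ultimately show ?case using E by fastforce
qed

end

theorem lemma3p8: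
  fixes C :: "('o, 'm, 'e) extri" and XX YY :: "'o set" and n :: nat
    and K Y :: "nat \<Rightarrow> 'o" and A A' :: 'o
  assumes "standing C"
    and "subcat C XX" and "subcat C YY" and "XX \<subseteq> YY"
    and "ext_closed C YY" and "generator C XX YY"
    and "n \<ge> 1"
    and "K 1 = A" and "K (Suc n) = A'"
    and "\<forall>i \<in> {1..n}. Y i \<in> YY \<and> etri C (K (Suc i)) (Y i) (K i)"
  shows "\<exists>U V. U \<in> obs C \<and> V \<in> obs C \<and> U \<in> YY \<and> etri C U V A' \<and>
           (\<exists>L X. L 1 = A \<and> L (Suc n) = V \<and>
              (\<forall>i \<in> {1..n}. X i \<in> XX \<and> etri C (L (Suc i)) (X i) (L i)))"
proof -
  interpret extriangulated C using assms(1) by unfold_locales (simp add: standing_def)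
  show ?thesis
    using generator_resolution[OF assms(5-7,10)] assms(8,9) etri_obs by metis
qed

end
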